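(* Let $X=x_1x_2\cdots x_s$ be a batch of $S(H)$, where each $x_j$ is $s(v)$ for some vertex $v$ or $e(v,w)$ for some edge $(v,w)$ of $H$. Then for every $1\le j\le s$, some phrase of the LZ77 parsing of the string $x_1\cdots x_s$ ends at the last symbol of $x_j$.
   Context: $H$ is a directed graph without loops in which no vertex has outdegree exactly 1. For each vertex $v$ introduce three symbols $v$, $v'$, $\$_v$; all these symbols are pairwise distinct (over all vertices). For a vertex $v$ with outdegree $d=d(v)\ge 1$, let $w_0,\dots,w_{d-1}$ be its out-neighbors in a fixed cyclic order (indices mod $d$); the edge $(v,w_{i-1})$ cyclicly precedes $(v,w_i)$. Define $e(v,w_i)=(v'w_{i-1})^4v'w_i$ for $0\le i<d$ and $s(v)=v^4(v')^5\$_v$. $S(H)$ is the set of all strings $s(v)$ ($v$ a vertex) and $e(v,w)$ ($(v,w)$ an edge). A batch is a sequence of distinct elements of $S(H)$, identified with their concatenation; a schedule is a partition of $S(H)$ into batches. LZ77 parsing of a string $z$: $z=z_1z_2\cdots z_t$ where, once $z_1,\dots,z_{i-1}$ are determined and the remaining suffix is nonempty, $z_i$ is the longest nonempty prefix $u$ of the remaining suffix such that $u^-$ ($u$ with its last symbol deleted) has an occurrence in $z$ starting at a position strictly smaller than the starting position of $u$ (the empty string always qualifies). The $z_i$ are the phrases; $|\mathcal C(z)|=t$ is the number of phrases. *)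

theory Defs
  imports Main
begin

text \<open>Symbols: for each vertex v the three pairwise distinct symbols v, v', and dollar_v.\<close>
datatype 'a sym = Plain 'a | Primed 'a | Dollar 'a

text \<open>Standing assumptions on H = (V, E) together with a fixed cyclic order
  (the list cord v enumerates the out-neighbours w_0, ..., w_(d-1) of v).\<close>
definition valid_graph :: "'a set \<Rightarrow> ('a \<times> 'a) set \<Rightarrow> ('a \<Rightarrow> 'a list) \<Rightarrow> bool" where
  "valid_graph V E cord \<longleftrightarrow> finite V \<and> E \<subseteq> V \<times> V \<and> (\<forall>v. (v, v) \<notin> E)
     \<and> (\<forall>v\<in>V. card {w. (v, w) \<in> E} \<noteq> 1)
     \<and> (\<forall>v\<in>V. distinct (cord v) \<and> set (cord v) = {w. (v, w) \<in> E})"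

definition s_str :: "'a \<Rightarrow> 'a sym list" where
  "s_str v = replicate 4 (Plain v) @ replicate 5 (Primed v) @ [Dollar v]"

text \<open>e(v,w_i) = (v' w_(i-1))^4 v' w_i, indices mod d.\<close>
definition e_str :: "('a \<Rightarrow> 'a list) \<Rightarrow> 'a \<Rightarrow> 'a \<Rightarrow> 'a sym list" where
  "e_str cord v w = (let ws = cord v; d = length ws; i = (THE i. i < d \<and> ws ! i = w);
                        wp = ws ! ((i + d - 1) mod d)
                     in concat (replicate 4 [Primed v, Plain wp]) @ [Primed v, Plain w])"

definition S_set :: "'a set \<Rightarrow> ('a \<times> 'a) set \<Rightarrow> ('a \<Rightarrow> 'a list) \<Rightarrow> 'a sym list set" where
  "S_set V E cord = {s_str v | v. v \<in> V} \<union> {e_str cord v w | v w. (v, w) \<in> E}"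

definition is_batch :: "'a set \<Rightarrow> ('a \<times> 'a) set \<Rightarrow> ('a \<Rightarrow> 'a list) \<Rightarrow> 'a sym list list \<Rightarrow> bool" where
  "is_batch V E cord xs \<longleftrightarrow> distinct xs \<and> set xs \<subseteq> S_set V E cord"

text \<open>LZ77. Positions are 0-based. A candidate phrase at position p of length l
  (p + l <= length z) qualifies if l = 1 (u^- empty) or u^- = z[p..p+l-1) occurs in z
  starting at some q < p.\<close>
definition lz_qualifies :: "'b list \<Rightarrow> nat \<Rightarrow> nat \<Rightarrow> bool" where
  "lz_qualifies z p l \<longleftrightarrow> 1 \<le> l \<and> p + l \<le> length z \<and>
     (l = 1 \<or> (\<exists>q<p. q + (l - 1) \<le> length z \<and>
                 take (l - 1) (drop q z) = take (l - 1) (drop p z)))"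

definition lz_phrase_len :: "'b list \<Rightarrow> nat \<Rightarrow> nat" where
  "lz_phrase_len z p = (GREATEST l. lz_qualifies z p l)"

inductive lz_start :: "'b list \<Rightarrow> nat \<Rightarrow> bool" for z where
  start0: "lz_start z 0"
| step: "lz_start z p \<Longrightarrow> p < length z \<Longrightarrow> lz_start z (p + lz_phrase_len z p)"

text \<open>Some phrase of the LZ77 parsing of z ends at (0-based) position k
  (i.e. its last symbol is z ! k).\<close>
definition lz_phrase_ends_at :: "'b list \<Rightarrow> nat \<Rightarrow> bool" where
  "lz_phrase_ends_at z k \<longleftrightarrow> (\<exists>p. lz_start z p \<and> p < length z \<and> p + lz_phrase_len z p = Suc k)"

end

theory Submission
  imports Defs
begin

(* Every string of S(H) has length 10, so by induction over the blocks of the batch it suffices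
   to show that a phrase starting at a block boundary b ends exactly at b + 9.
   For s(v) this holds because dollar_v occurs only once, so no phrase can copy across it.
   For e(v,w) = (v'a)^4 v'w, with a the cyclic predecessor of w, the pattern a v' a occurs only
   inside this block (with v' at offset 0, 2, 4 or 6), since distinct out-neighbours of v have
   distinct predecessors.  Hence the phrase covering offset 4 either starts at offset >= 2 or
   copies from two positions back; in both cases the period 2 of the block lets it run up to b + 9,
   and it stops there because a v' a v' w occurs nowhere earlier. *)

lemma lz_qualifies_1: "p < length z \<Longrightarrow> lz_qualifies z p 1"
  by (simp add: lz_qualifies_def)

lemma lz_phrase_len_qualifies: "p < length z \<Longrightarrow> lz_qualifies z p (lz_phrase_len z p)"
  unfolding lz_phrase_len_def
  by (rule GreatestI_nat[where k = 1 and b = "length z"])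
     (auto simp: lz_qualifies_1 lz_qualifies_def)

lemma lz_phrase_len_ge: "lz_qualifies z p l \<Longrightarrow> l \<le> lz_phrase_len z p"
  unfolding lz_phrase_len_def
  by (rule Greatest_le_nat[where b = "length z"]) (auto simp: lz_qualifies_def)

lemma lz_phrase_len_pos: "p < length z \<Longrightarrow> 0 < lz_phrase_len z p"
  using lz_phrase_len_ge[OF lz_qualifies_1] by fastforce

lemma lz_qualifiesI:
  assumes "q < p" "p + l \<le> length z" "1 \<le> l" "\<And>i. i < l - 1 \<Longrightarrow> z ! (q + i) = z ! (p + i)"
  shows "lz_qualifies z p l"
proof -
  have "take (l - 1) (drop q z) = take (l - 1) (drop p z)"
    using assms by (intro nth_equalityI) auto
  then show ?thesis
    using assms by (auto simp: lz_qualifies_def)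
qed

lemma lz_qualifiesE:
  assumes "lz_qualifies z p l" "2 \<le> l"
  obtains q where "q < p" "q + (l - 1) \<le> length z" "\<And>i. i < l - 1 \<Longrightarrow> z ! (q + i) = z ! (p + i)"
proof -
  from assms obtain q where q: "q < p" "q + (l - 1) \<le> length z"
    and eq: "take (l - 1) (drop q z) = take (l - 1) (drop p z)"
    by (auto simp: lz_qualifies_def)
  have "z ! (q + i) = z ! (p + i)" if "i < l - 1" for i
    using arg_cong[OF eq, of "\<lambda>u. u ! i"] that q assms(1) by (simp add: lz_qualifies_def)
  with q show thesis by (rule that)
qed

lemma lz_phrase_end_le_fresh:
  assumes "p \<le> r" "r < length z" "0 < n"
    and fresh: "\<And>r'. r' < r \<Longrightarrow> r' + n \<le> length z \<Longrightarrow> \<exists>i<n. z ! (r' + i) \<noteq> z ! (r + i)"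
  shows "p + lz_phrase_len z p \<le> r + n"
proof (rule ccontr)
  define L where "L = lz_phrase_len z p"
  assume "\<not> p + lz_phrase_len z p \<le> r + n"
  then have long: "r + n < p + L" by (simp add: L_def)
  have "lz_qualifies z p L"
    unfolding L_def using assms(1,2) by (simp add: lz_phrase_len_qualifies)
  then obtain q where q: "q < p" "q + (L - 1) \<le> length z"
    and src: "\<And>i. i < L - 1 \<Longrightarrow> z ! (q + i) = z ! (p + i)"
    using long assms(1,3) by (elim lz_qualifiesE) auto
  have "z ! (q + (r - p) + i) = z ! (r + i)" if "i < n" for i
    using src[of "r - p + i"] that long assms(1) by (simp add: algebra_simps)
  moreover have "q + (r - p) < r" "q + (r - p) + n \<le> length z"
    using q long assms(1) by auto
  ultimately show False using fresh by blast
qed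

lemma lz_phrase_containing:
  assumes "lz_start z p" "p \<le> t" "t < length z"
  shows "\<exists>p'. lz_start z p' \<and> p \<le> p' \<and> p' \<le> t \<and> t < p' + lz_phrase_len z p'"
  using assms
proof (induction "t - p" arbitrary: p rule: less_induct)
  case less
  show ?case
  proof (cases "t < p + lz_phrase_len z p")
    case True
    with less.prems show ?thesis by blast
  next
    case False
    have "p < length z" using less.prems by simp
    then have "lz_start z (p + lz_phrase_len z p)" "0 < lz_phrase_len z p"
      using less.prems(1) by (auto intro: lz_start.step simp: lz_phrase_len_pos)
    moreover have "t - (p + lz_phrase_len z p) < t - p"
      using False calculation(2) by linarith
    ultimately obtain p' where "lz_start z p'" "p + lz_phrase_len z p \<le> p'"
      "p' \<le> t" "t < p' + lz_phrase_len z p'"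
      using less.hyps[of "p + lz_phrase_len z p"] False less.prems(3) by auto
    then show ?thesis by force
  qed
qed

lemma lz_start_after_phrase_end: "lz_phrase_ends_at z k \<Longrightarrow> lz_start z (Suc k)"
  unfolding lz_phrase_ends_at_def by (metis lz_start.step)

(* e(u,w), with the cyclic predecessor y of w made a parameter. *)
definition edge_str :: "'a \<Rightarrow> 'a \<Rightarrow> 'a \<Rightarrow> 'a sym list" where
  "edge_str u y w = concat (replicate 4 [Primed u, Plain y]) @ [Primed u, Plain w]"

lemma length_s_str [simp]: "length (s_str u) = 10"
  by (simp add: s_str_def)

lemma length_edge_str [simp]: "length (edge_str u y w) = 10"
  by (simp add: edge_str_def numeral_eq_Suc)

lemma s_str_nth:
  "k < 10 \<Longrightarrow> s_str u ! k = (if k < 4 then Plain u else if k < 9 then Primed u else Dollar u)"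
  by (auto simp: s_str_def numeral_eq_Suc less_Suc_eq)

lemma edge_str_nth:
  "k < 10 \<Longrightarrow> edge_str u y w ! k = (if even k then Primed u else if k = 9 then Plain w else Plain y)"
  by (auto simp: edge_str_def numeral_eq_Suc less_Suc_eq) presburger+

lemma edge_str_eq_iff [simp]: "edge_str u y w = edge_str u' y' w' \<longleftrightarrow> u = u' \<and> y = y' \<and> w = w'"
  by (auto simp: edge_str_def numeral_eq_Suc)

lemma length_concat_equal_length:
  "(\<And>x. x \<in> set ys \<Longrightarrow> length x = n) \<Longrightarrow> length (concat ys) = n * length ys"
  by (induction ys) auto

lemma nth_concat_equal_length:
  assumes "\<And>x. x \<in> set ys \<Longrightarrow> length x = n" "i < length ys" "k < n"
  shows "concat ys ! (n * i + k) = ys ! i ! k"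
proof -
  have "length (concat (take i ys)) = n * i"
    using assms(1,2) by (subst length_concat_equal_length[of _ n]) (auto dest: in_set_takeD)
  then show ?thesis
    using assms by (subst id_take_nth_drop[OF assms(2)]) (simp add: nth_append)
qed

locale batch_blocks =
  fixes xs :: "'a sym list list"
  assumes block_shape: "x \<in> set xs \<Longrightarrow> (\<exists>u. x = s_str u) \<or> (\<exists>u y w. x = edge_str u y w \<and> y \<noteq> w)"
    and edge_str_determined: "edge_str u y w \<in> set xs \<Longrightarrow> edge_str u y w' \<in> set xs \<Longrightarrow> w = w'"
    and distinct_blocks: "distinct xs"
begin

abbreviation batch_str :: "'a sym list" where
  "batch_str \<equiv> concat xs"

lemma length_block: "x \<in> set xs \<Longrightarrow> length x = 10"
  using block_shape by fastforce

lemma length_concat_take: "j \<le> length xs \<Longrightarrow> length (concat (take j xs)) = 10 * j"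
  by (subst length_concat_equal_length[of _ 10]) (auto dest: in_set_takeD simp: length_block)

lemma length_batch_str: "length batch_str = 10 * length xs"
  using length_concat_take[of "length xs"] by simp

lemma batch_str_nth: "i < length xs \<Longrightarrow> k < 10 \<Longrightarrow> batch_str ! (10 * i + k) = xs ! i ! k"
  by (rule nth_concat_equal_length) (auto simp: length_block)

lemma batch_str_block_nth:
  assumes "j < length xs" "k < 10"
  shows "xs ! j = s_str v \<Longrightarrow>
      batch_str ! (10 * j + k) = (if k < 4 then Plain v else if k < 9 then Primed v else Dollar v)"
    and "xs ! j = edge_str v a w \<Longrightarrow>
      batch_str ! (10 * j + k) = (if even k then Primed v else if k = 9 then Plain w else Plain a)"
  using assms by (simp_all add: batch_str_nth s_str_nth edge_str_nth)

lemma block_index_eq: "i < length xs \<Longrightarrow> j < length xs \<Longrightarrow> xs ! i = xs ! j \<Longrightarrow> i = j"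
  using distinct_blocks nth_eq_iff_index_eq by blast

lemma position_in_block:
  assumes "r < length batch_str"
  obtains i k where "r = 10 * i + k" "i < length xs" "k < 10"
  using assms length_batch_str by (intro that[of "r div 10" "r mod 10"]) auto

lemma Dollar_position:
  assumes "j < length xs" "xs ! j = s_str v" "r < length batch_str" "batch_str ! r = Dollar v"
  shows "r = 10 * j + 9"
proof -
  obtain i k where r: "r = 10 * i + k" "i < length xs" "k < 10"
    using position_in_block[OF assms(3)] .
  have "xs ! i ! k = Dollar v"
    using assms(4) r by (simp add: batch_str_nth)
  then have "k = 9 \<and> xs ! i = xs ! j"
    using block_shape[OF nth_mem[OF r(2)]] r(3) assms(2)
    by (auto simp: s_str_nth edge_str_nth split: if_splits)
  then show ?thesis
    using block_index_eq[OF r(2) assms(1)] r(1) by simp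
qed

lemma Plain_Primed_Plain_position:
  assumes "j < length xs" "xs ! j = edge_str v a w" "r + 2 < length batch_str"
    and "batch_str ! r = Plain a" "batch_str ! (r + 1) = Primed v" "batch_str ! (r + 2) = Plain a"
  obtains k where "k \<le> 3" "r + 1 = 10 * j + 2 * k"
proof -
  obtain i k where r: "r + 1 = 10 * i + k" "i < length xs" "k < 10"
    using position_in_block[of "r + 1"] assms(3) by auto
  have at: "xs ! i ! k = Primed v"
    using assms(5) r by (simp add: batch_str_nth)
  have after: "k < 9 \<Longrightarrow> xs ! i ! (k + 1) = Plain a"
    using assms(6) r batch_str_nth[of i "k + 1"] by simp
  have before: "0 < k \<Longrightarrow> xs ! i ! (k - 1) = Plain a"
  proof -
    assume "0 < k"
    then have "r = 10 * i + (k - 1)" using r(1) by simp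
    then show ?thesis using assms(4) r(2,3) batch_str_nth[of i "k - 1"] by simp
  qed
  have "even k \<and> k \<le> 6 \<and> xs ! i = xs ! j"
    using block_shape[OF nth_mem[OF r(2)]]
  proof (elim disjE exE conjE)
    fix u assume "xs ! i = s_str u"
    with at after r(3) show ?thesis by (auto simp: s_str_nth split: if_splits)
  next
    fix u y x assume blk: "xs ! i = edge_str u y x" "y \<noteq> x"
    with at r(3) have k: "even k" "k \<le> 8" "u = v"
      by (auto simp: edge_str_nth split: if_splits)
    with blk after before r(3) have "k \<noteq> 8" by (auto simp: edge_str_nth)
    with k blk after r(3) have "k \<le> 6" "y = a" by (auto simp: edge_str_nth)
    with blk k have "x = w"
      using edge_str_determined nth_mem[OF r(2)] nth_mem[OF assms(1)] assms(2) by metis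
    with blk k \<open>y = a\<close> \<open>k \<le> 6\<close> assms(2) show ?thesis by simp
  qed
  then show thesis
    using that[of "k div 2"] block_index_eq[OF r(2) assms(1)] r(1) by auto
qed

lemma s_block_phrase_end:
  assumes "lz_start batch_str (10 * j)" "j < length xs" "xs ! j = s_str v"
  shows "lz_phrase_ends_at batch_str (10 * j + 9)"
proof -
  have len: "10 * j + 10 \<le> length batch_str"
    using assms(2) length_batch_str by simp
  then obtain p where p: "lz_start batch_str p" "10 * j \<le> p" "p \<le> 10 * j + 9"
    "10 * j + 9 < p + lz_phrase_len batch_str p"
    using lz_phrase_containing[OF assms(1), of "10 * j + 9"] by auto
  have "batch_str ! (10 * j + 9) = Dollar v"
    using batch_str_block_nth(1)[OF assms(2) _ assms(3), of 9] by simp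
  have "p + lz_phrase_len batch_str p \<le> 10 * j + 9 + 1"
  proof (rule lz_phrase_end_le_fresh)
    fix r' assume "r' < 10 * j + 9" "r' + 1 \<le> length batch_str"
    then have "batch_str ! r' \<noteq> Dollar v"
      using Dollar_position[OF assms(2,3), of r'] by auto
    with \<open>batch_str ! (10 * j + 9) = Dollar v\<close>
    show "\<exists>i<1. batch_str ! (r' + i) \<noteq> batch_str ! (10 * j + 9 + i)" by auto
  qed (use p len in auto)
  with p len show ?thesis
    unfolding lz_phrase_ends_at_def by (intro exI[of _ p]) auto
qed

lemma edge_block_phrase_source:
  assumes "j < length xs" "xs ! j = edge_str v a w"
    and "10 * j \<le> p" "p \<le> 10 * j + 1" "10 * j + 4 < p + lz_phrase_len batch_str p"
  shows "2 \<le> p"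
    and "i < lz_phrase_len batch_str p - 1 \<Longrightarrow> batch_str ! (p - 2 + i) = batch_str ! (p + i)"
proof -
  define b L where "b = 10 * j" and "L = lz_phrase_len batch_str p"
  have len: "b + 10 \<le> length batch_str"
    using assms(1) length_batch_str by (simp add: b_def)
  have block: "k < 10 \<Longrightarrow> batch_str ! (b + k) = (if even k then Primed v else if k = 9 then Plain w else Plain a)" for k
    using batch_str_block_nth(2)[OF assms(1) _ assms(2)] by (simp add: b_def)
  have "lz_qualifies batch_str p L"
    using len assms(4) by (simp add: L_def b_def lz_phrase_len_qualifies)
  then obtain q where q: "q < p" "\<And>i. i < L - 1 \<Longrightarrow> batch_str ! (q + i) = batch_str ! (p + i)"
    using assms(4,5) by (elim lz_qualifiesE) (auto simp: L_def b_def)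
  have src: "batch_str ! (q + (b + 1 - p) + i) = batch_str ! (b + (1 + i))" if "i < 3" for i
    using q(2)[of "b + 1 - p + i"] that assms(4,5) by (simp add: L_def b_def add.assoc)
  have "q + (b + 1 - p) + 2 < length batch_str"
    using q(1) assms(4) len by (simp add: b_def)
  moreover have "batch_str ! (q + (b + 1 - p)) = Plain a"
    "batch_str ! (q + (b + 1 - p) + 1) = Primed v" "batch_str ! (q + (b + 1 - p) + 2) = Plain a"
    using src[of 0] src[of 1] src[of 2] block[of 1] block[of 2] block[of 3]
    by (simp_all add: numeral_3_eq_3)
  ultimately obtain k where "q + (b + 1 - p) + 1 = b + 2 * k"
    using Plain_Primed_Plain_position[OF assms(1,2)] unfolding b_def by metis
  then have "q + 2 = p"
    using q(1) assms(3,4) by (cases k) (auto simp: b_def)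
  with q(2) show "2 \<le> p"
    and "i < lz_phrase_len batch_str p - 1 \<Longrightarrow> batch_str ! (p - 2 + i) = batch_str ! (p + i)"
    by (auto simp: L_def)
qed

lemma edge_block_phrase_reaches_end:
  assumes "j < length xs" "xs ! j = edge_str v a w"
    and "10 * j \<le> p" "p \<le> 10 * j + 4" "10 * j + 4 < p + lz_phrase_len batch_str p"
  shows "10 * j + 10 \<le> p + lz_phrase_len batch_str p"
proof -
  define b where "b = 10 * j"
  have len: "b + 10 \<le> length batch_str"
    using assms(1) length_batch_str by (simp add: b_def)
  have block: "k < 10 \<Longrightarrow> batch_str ! (b + k) = (if even k then Primed v else if k = 9 then Plain w else Plain a)" for k
    using batch_str_block_nth(2)[OF assms(1) _ assms(2)] by (simp add: b_def)
  have p2: "2 \<le> p"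
    using edge_block_phrase_source(1)[OF assms(1-3) _ assms(5)] by (cases "p \<le> b + 1") (auto simp: b_def)
  have period: "batch_str ! t = batch_str ! (t + 2)" if "p \<le> t + 2" "t < b + 7" for t
  proof (cases "b \<le> t")
    case True
    then show ?thesis
      using that block[of "t - b"] block[of "t - b + 2"] by auto
  next
    case False
    then have "p \<le> 10 * j + 1" "t + 2 - p < lz_phrase_len batch_str p - 1"
      using that(1) assms(3,5) by (auto simp: b_def)
    moreover have "p - 2 + (t + 2 - p) = t" "p + (t + 2 - p) = t + 2"
      using p2 that(1) by simp_all
    ultimately show ?thesis
      using edge_block_phrase_source(2)[OF assms(1-3) _ assms(5), of "t + 2 - p"] by metis
  qed
  have "lz_qualifies batch_str p (b + 10 - p)"
  proof (rule lz_qualifiesI[of "p - 2"])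
    fix i assume "i < b + 10 - p - 1"
    with p2 have "p \<le> p - 2 + i + 2" "p - 2 + i < b + 7" "p - 2 + i + 2 = p + i"
      by auto
    then show "batch_str ! (p - 2 + i) = batch_str ! (p + i)"
      using period by metis
  qed (use p2 assms(4) len in \<open>auto simp: b_def\<close>)
  then show ?thesis
    using lz_phrase_len_ge assms(4) by (fastforce simp: b_def)
qed

lemma edge_block_phrase_stops_at_end:
  assumes "j < length xs" "xs ! j = edge_str v a w" "a \<noteq> w" "p \<le> 10 * j + 5"
  shows "p + lz_phrase_len batch_str p \<le> 10 * j + 10"
proof -
  define b where "b = 10 * j"
  have len: "b + 10 \<le> length batch_str"
    using assms(1) length_batch_str by (simp add: b_def)
  have block: "k < 10 \<Longrightarrow> batch_str ! (b + k) = (if even k then Primed v else if k = 9 then Plain w else Plain a)" for k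
    using batch_str_block_nth(2)[OF assms(1) _ assms(2)] by (simp add: b_def)
  have "p + lz_phrase_len batch_str p \<le> b + 5 + 5"
  proof (rule lz_phrase_end_le_fresh)
    fix r assume r: "r < b + 5" "r + 5 \<le> length batch_str"
    show "\<exists>i<5. batch_str ! (r + i) \<noteq> batch_str ! (b + 5 + i)"
    proof (rule ccontr)
      assume "\<not> ?thesis"
      then have copy: "batch_str ! (r + i) = batch_str ! (b + (5 + i))" if "i < 5" for i
        using that by (simp add: add.assoc)
      have "batch_str ! r = Plain a" "batch_str ! (r + 1) = Primed v"
        "batch_str ! (r + 2) = Plain a" and last: "batch_str ! (r + 4) = Plain w"
        using copy[of 0] copy[of 1] copy[of 2] copy[of 4] block[of 5] block[of 6] block[of 7] block[of 9]
        by simp_all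
      moreover have "r + 2 < length batch_str" using r(2) by simp
      ultimately obtain k where "k \<le> 3" "r + 1 = b + 2 * k"
        using Plain_Primed_Plain_position[OF assms(1,2)] unfolding b_def by metis
      with r(1) have "r + 4 = b + (2 * k + 3)" "2 * k + 3 < 9" by auto
      with last have "batch_str ! (b + (2 * k + 3)) = Plain w" by simp
      with block[of "2 * k + 3"] \<open>2 * k + 3 < 9\<close> assms(3) show False by simp
    qed
  qed (use assms(4) len in \<open>auto simp: b_def\<close>)
  then show ?thesis by (simp add: b_def)
qed

lemma block_phrase_end:
  assumes "lz_start batch_str (10 * j)" "j < length xs"
  shows "lz_phrase_ends_at batch_str (10 * j + 9)"
  using block_shape[OF nth_mem[OF assms(2)]]
proof (elim disjE exE conjE)
  fix u assume "xs ! j = s_str u"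
  then show ?thesis using s_block_phrase_end[OF assms] by simp
next
  fix u y x assume blk: "xs ! j = edge_str u y x" "y \<noteq> x"
  have len: "10 * j + 10 \<le> length batch_str"
    using assms(2) length_batch_str by simp
  then obtain p where p: "lz_start batch_str p" "10 * j \<le> p" "p \<le> 10 * j + 4"
    "10 * j + 4 < p + lz_phrase_len batch_str p"
    using lz_phrase_containing[OF assms(1), of "10 * j + 4"] by auto
  have "p + lz_phrase_len batch_str p = 10 * j + 10"
    using edge_block_phrase_reaches_end[OF assms(2) blk(1) p(2-4)]
      edge_block_phrase_stops_at_end[OF assms(2) blk, of p] p(3) by simp
  with p len show ?thesis
    unfolding lz_phrase_ends_at_def by (intro exI[of _ p]) auto
qed

lemma lz_start_block: "j < length xs \<Longrightarrow> lz_start batch_str (10 * j)"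
proof (induction j)
  case 0
  show ?case using lz_start.start0 by simp
next
  case (Suc j)
  then have "lz_phrase_ends_at batch_str (10 * j + 9)"
    using block_phrase_end by simp
  then show ?case
    using lz_start_after_phrase_end by fastforce
qed

end

definition cyc_pred :: "'a list \<Rightarrow> 'a \<Rightarrow> 'a" where
  "cyc_pred ws w = (let d = length ws; i = (THE i. i < d \<and> ws ! i = w) in ws ! ((i + d - 1) mod d))"

lemma e_str_eq_edge_str: "e_str cord v w = edge_str v (cyc_pred (cord v) w) w"
  by (simp add: e_str_def cyc_pred_def edge_str_def Let_def)

lemma cyc_pred_nth:
  assumes "distinct ws" "i < length ws"
  shows "cyc_pred ws (ws ! i) = ws ! (if i = 0 then length ws - 1 else i - 1)"
proof -
  have "(THE k. k < length ws \<and> ws ! k = ws ! i) = i"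
    using assms by (auto simp: nth_eq_iff_index_eq)
  moreover have "(i + length ws - 1) mod length ws = (if i = 0 then length ws - 1 else i - 1)"
    using assms(2) by (auto simp: le_mod_geq)
  ultimately show ?thesis
    by (simp add: cyc_pred_def Let_def)
qed

lemma cyc_pred_neq:
  assumes "distinct ws" "2 \<le> length ws" "w \<in> set ws"
  shows "cyc_pred ws w \<noteq> w"
proof -
  obtain i where "i < length ws" "w = ws ! i"
    using assms(3) by (auto simp: in_set_conv_nth)
  with assms(1,2) show ?thesis
    by (auto simp: cyc_pred_nth nth_eq_iff_index_eq)
qed

lemma inj_on_cyc_pred: "distinct ws \<Longrightarrow> inj_on (cyc_pred ws) (set ws)"
  by (auto intro!: inj_onI simp: in_set_conv_nth cyc_pred_nth nth_eq_iff_index_eq split: if_splits)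

lemma valid_graph_out_list:
  assumes "valid_graph V E cord" "(v, w) \<in> E"
  shows "distinct (cord v)" "set (cord v) = {w. (v, w) \<in> E}" "2 \<le> length (cord v)"
proof -
  have "v \<in> V" using assms by (auto simp: valid_graph_def)
  with assms(1) show dist: "distinct (cord v)" and set: "set (cord v) = {w. (v, w) \<in> E}"
    by (auto simp: valid_graph_def)
  have "length (cord v) \<noteq> 1"
    using assms(1) \<open>v \<in> V\<close> distinct_card[OF dist] set by (auto simp: valid_graph_def)
  moreover have "length (cord v) \<noteq> 0" using set assms(2) by auto
  ultimately show "2 \<le> length (cord v)" by linarith
qed

lemma edge_str_in_S_set:
  assumes "edge_str u y w \<in> S_set V E cord"
  shows "(u, w) \<in> E" "y = cyc_pred (cord u) w"
proof -
  have "edge_str u y w \<noteq> s_str v" for v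
    by (simp add: edge_str_def s_str_def numeral_eq_Suc)
  with assms obtain v x where "(v, x) \<in> E" "edge_str u y w = edge_str v (cyc_pred (cord v) x) x"
    unfolding S_set_def e_str_eq_edge_str by blast
  then show "(u, w) \<in> E" "y = cyc_pred (cord u) w" by simp_all
qed

lemma batch_blocks_if_batch:
  assumes "valid_graph V E cord" "is_batch V E cord xs"
  shows "batch_blocks xs"
proof
  fix x assume "x \<in> set xs"
  then have "x \<in> S_set V E cord" using assms(2) by (auto simp: is_batch_def)
  then consider (vertex) u where "x = s_str u" | (edge) v w where "x = e_str cord v w" "(v, w) \<in> E"
    unfolding S_set_def by blast
  then show "(\<exists>u. x = s_str u) \<or> (\<exists>u y w. x = edge_str u y w \<and> y \<noteq> w)"
  proof cases
    case edge
    then have "cyc_pred (cord v) w \<noteq> w"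
      using cyc_pred_neq[OF valid_graph_out_list(1,3)[OF assms(1) edge(2)]]
        valid_graph_out_list(2)[OF assms(1) edge(2)] edge(2) by simp
    with edge(1) show ?thesis by (auto simp: e_str_eq_edge_str)
  qed blast
next
  fix u y w w'
  assume "edge_str u y w \<in> set xs" "edge_str u y w' \<in> set xs"
  then have "edge_str u y w \<in> S_set V E cord" "edge_str u y w' \<in> S_set V E cord"
    using assms(2) by (auto simp: is_batch_def)
  then have "(u, w) \<in> E" "(u, w') \<in> E" "cyc_pred (cord u) w = cyc_pred (cord u) w'"
    using edge_str_in_S_set by metis+
  then show "w = w'"
    using inj_on_cyc_pred valid_graph_out_list[OF assms(1)] by (metis inj_onD mem_Collect_eq)
next
  show "distinct xs" using assms(2) by (simp add: is_batch_def)
qed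

theorem lemma5:
  fixes V :: "'a set" and E :: "('a \<times> 'a) set" and cord :: "'a \<Rightarrow> 'a list"
    and xs :: "'a sym list list"
  assumes "valid_graph V E cord"
    and "is_batch V E cord xs"
  shows "\<forall>j. 1 \<le> j \<and> j \<le> length xs \<longrightarrow>
           lz_phrase_ends_at (concat xs) (length (concat (take j xs)) - 1)"
proof (intro allI impI)
  interpret batch_blocks xs
    using batch_blocks_if_batch[OF assms] .
  fix j assume j: "1 \<le> j \<and> j \<le> length xs"
  then have "length (concat (take j xs)) = 10 * j"
    using length_concat_take by simp
  with j have "length (concat (take j xs)) - 1 = 10 * (j - 1) + 9"
    by (cases j) auto
  moreover have "j - 1 < length xs" using j by linarith
  ultimately show "lz_phrase_ends_at (concat xs) (length (concat (take j xs)) - 1)"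
    using block_phrase_end lz_start_block by simp
qed

end
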